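(* Under the Setting, Algorithm and Strong convexity assumption described in the context, if $\{x_k\}_{k\ge1}$ is generated by the inexact CSA algorithm with policy (P2), then $\mathcal B\neq\emptyset$, so that $\bar x_{N,s}=\sum_{k\in\mathcal B}\rho_kx_k/\sum_{k\in\mathcal B}\rho_k$ is well defined.
   Context: Setting. $\mathcal X\subset\mathbb R^n$ is convex and compact; $f:\mathcal X\to\mathbb R$ is convex and $L_f$-Lipschitz; $\Delta\subset\mathbb R^d$ is compact; $g:\mathcal X\times\Delta\to\mathbb R$ is such that for every $\delta\in\Delta$, $x\mapsto g(x,\delta)$ is convex and $L_{g,\mathcal X}$-Lipschitz, and for every $x\in\mathcal X$, $\delta\mapsto g(x,\delta)$ is $L_{g,\Delta}$-Lipschitz. Let $G(x):=\max_{\delta\in\Delta}g(x,\delta)$ and assume the problem $\min_{x\in\mathcal X}\{f(x):G(x)\le0\}$ has an optimal solution $x^*$. Norms are Euclidean. $f'(x)$ denotes a subgradient of $f$ at $x$ and $g'(x,\delta)$ a subgradient of $g(\cdot,\delta)$ at $x$. Let $\omega_{\mathcal X}:\mathcal X\to\mathbb R$ be continuously differentiable and $1$-strongly convex; $V(x,z):=\omega_{\mathcal X}(z)-\omega_{\mathcal X}(x)-\langle\nabla\omega_{\mathcal X}(x),z-x\rangle$; prox-mapping $P_{x,\mathcal X}(y):=\arg\min_{z\in\mathcal X}\{\langle y,z\rangle+V(x,z)\}$; $D_{\mathcal X}:=\sqrt{\max_{x,z\in\mathcal X}V(x,z)}$. Algorithm (inexact CSA). Inputs: $N\ge1$, $x_1\in\mathcal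 X$, tolerances $\eta_k>0$, step-sizes $\gamma_k>0$. For $k=1,\dots,N$: choose some $\delta_k\in\Delta$ (an approximate maximizer of $g(x_k,\cdot)$); set $h_k=f'(x_k)$ if $g(x_k,\delta_k)\le\eta_k$ and $h_k=g'(x_k,\delta_k)$ otherwise; set $x_{k+1}=P_{x_k,\mathcal X}(\gamma_kh_k)$. For $1\le s\le N$ let $I=\{s,\dots,N\}$, $\mathcal B:=\{k\in I: g(x_k,\delta_k)\le\eta_k\}$, $\mathcal N:=I\setminus\mathcal B$. Strong convexity assumption: $f$ is strongly convex with parameter $\mu_f>0$ (i.e. $f(x)\ge f(z)+\langle f'(z),x-z\rangle+\frac{\mu_f}{2}\|x-z\|^2$), each $g(\cdot,\delta)$ is strongly convex with parameter $\mu_g>0$ uniformly in $\delta$, and there is $L>0$ with $V(x,z)\le\frac L2\|x-z\|^2$ for all $x,z\in\mathcal X$. Define $a_k=\mu_f\gamma_k/L$ if $g(x_k,\delta_k)\le\eta_k$ and $a_k=\mu_g\gamma_k/L$ otherwise; $A_1=1$, $A_k=(1-a_k)A_{k-1}$ for $k\ge2$; $\rho_k=\gamma_k/A_k$. Policy (P2): for $k=1,\dots,N$, $\eta_k=\frac{8L}{N}\max\{\mu_f,\mu_g\}\max\{\frac{L_f^2}{\mu_f^2},\frac{L_{g,\mathcal X}^2}{\mu_g^2}\}$, $\gamma_k=\frac{2L}{\mu_f(k+1)}$ if $g(x_k,\delta_k)\le\eta_k$ and $\gamma_k=\frac{2L}{\mu_g(k+1)}$ otherwise, and $s=1$. *)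

theory Defs
  imports "HOL-Analysis.Analysis"
begin

definition is_subgrad_on :: "'a::real_inner set \<Rightarrow> ('a \<Rightarrow> real) \<Rightarrow> 'a \<Rightarrow> 'a \<Rightarrow> bool" where
  "is_subgrad_on S h x s \<longleftrightarrow> (\<forall>y\<in>S. h y \<ge> h x + inner s (y - x))"

definition strongly_convex_with :: "'a::real_normed_vector set \<Rightarrow> real \<Rightarrow> ('a \<Rightarrow> real) \<Rightarrow> bool" where
  "strongly_convex_with S mu h \<longleftrightarrow>
     (\<forall>x\<in>S. \<forall>y\<in>S. \<forall>t::real. 0 \<le> t \<longrightarrow> t \<le> 1 \<longrightarrow>
        h ((1 - t) *\<^sub>R x + t *\<^sub>R y) \<le> (1 - t) * h x + t * h y - mu / 2 * t * (1 - t) * (norm (x - y))\<^sup>2)"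

definition bregman :: "('a::real_inner \<Rightarrow> real) \<Rightarrow> ('a \<Rightarrow> 'a) \<Rightarrow> 'a \<Rightarrow> 'a \<Rightarrow> real" where
  "bregman \<omega> d\<omega> x z = \<omega> z - \<omega> x - inner (d\<omega> x) (z - x)"

definition is_prox :: "'a::real_inner set \<Rightarrow> ('a \<Rightarrow> real) \<Rightarrow> ('a \<Rightarrow> 'a) \<Rightarrow> 'a \<Rightarrow> 'a \<Rightarrow> 'a \<Rightarrow> bool" where
  "is_prox X \<omega> d\<omega> x y z \<longleftrightarrow>
     z \<in> X \<and> (\<forall>u\<in>X. inner y z + bregman \<omega> d\<omega> x z \<le> inner y u + bregman \<omega> d\<omega> x u)"

definition Gmax :: "('a \<Rightarrow> 'b \<Rightarrow> real) \<Rightarrow> 'b set \<Rightarrow> 'a \<Rightarrow> real" where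
  "Gmax g \<Delta> x = (SUP \<delta>\<in>\<Delta>. g x \<delta>)"

end

theory Submission
  imports Defs
begin

(*
  Suppose no iterate is eta-feasible, so every step is a subgradient step for a constraint
  function g(., delta_k) with step size 2 L / (mu_g (k + 1)). At a feasible point u we have
  g(u, delta_k) <= 0 < eta < g(x_k, delta_k), so strong convexity and the three-point inequality
  of the prox-mapping contract V_k = V(x_k, u) by the factor 1 - gamma_k mu_g / L and in addition
  decrease it by gamma_k eta. Weighting step k by k (k + 1) / 2 makes the V-terms telescope, which
  leaves eta < 2 L L_g^2 / (mu_g (N + 1)); but policy (P2) chose eta >= 8 L L_g^2 / (mu_g N).
*)

lemma has_real_derivative_along_segment:
  fixes \<omega> :: "'a::real_inner \<Rightarrow> real"
  assumes d: "(\<omega> has_derivative (\<lambda>v. inner D v)) (at z within X)"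
    and X: "convex X" and z: "z \<in> X" and u: "u \<in> X"
  shows "((\<lambda>t. \<omega> (z + t *\<^sub>R (u - z))) has_real_derivative inner D (u - z)) (at 0 within {0..1})"
proof -
  let ?p = "\<lambda>t. z + t *\<^sub>R (u - z)"
  have p: "(?p has_derivative (\<lambda>t. t *\<^sub>R (u - z))) (at 0 within {0..1})"
    by (auto intro!: derivative_eq_intros)
  have "?p ` {0..1} \<subseteq> X"
  proof
    fix w assume "w \<in> ?p ` {0..1}"
    then obtain t where t: "0 \<le> t" "t \<le> 1" "w = (1 - t) *\<^sub>R z + t *\<^sub>R u"
      by (auto simp: algebra_simps)
    then show "w \<in> X" using convexD[OF X z u, of "1 - t" t] by simp
  qed
  then have "(\<omega> has_derivative (\<lambda>v. inner D v)) (at (?p 0) within ?p ` {0..1})"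
    using has_derivative_subset[OF d] by simp
  from has_derivative_in_compose[OF p this]
  have "((\<lambda>t. \<omega> (?p t)) has_derivative (\<lambda>t. inner D (u - z) * t)) (at 0 within {0..1})"
    by (simp add: mult.commute)
  then show ?thesis unfolding has_field_derivative_def .
qed

lemma right_derivative_ge_of_secant_ge:
  fixes p :: "real \<Rightarrow> real"
  assumes d: "(p has_real_derivative D) (at 0 within {0..1})"
    and secant: "\<And>t. 0 < t \<Longrightarrow> t \<le> 1 \<Longrightarrow> t * c \<le> p t - p 0"
  shows "c \<le> D"
proof (rule tendsto_lowerbound)
  show "((\<lambda>t. (p t - p 0) / (t - 0)) \<longlongrightarrow> D) (at_right 0)"
    using d unfolding has_field_derivative_iff at_within_Icc_at_right[of "0::real" 1, simplified] .
  show "\<forall>\<^sub>F t in at_right 0. c \<le> (p t - p 0) / (t - 0)"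
    unfolding eventually_at_right[OF zero_less_one]
    using secant by (auto intro!: exI[of _ 1] simp: pos_le_divide_eq mult.commute)
qed simp

lemma right_derivative_le_of_secant_le:
  fixes p :: "real \<Rightarrow> real"
  assumes d: "(p has_real_derivative D) (at 0 within {0..1})"
    and secant: "\<And>t. 0 < t \<Longrightarrow> t \<le> 1 \<Longrightarrow> p t - p 0 \<le> t * c + t * t * e"
  shows "D \<le> c"
proof (rule tendsto_le)
  show "((\<lambda>t. (p t - p 0) / (t - 0)) \<longlongrightarrow> D) (at_right 0)"
    using d unfolding has_field_derivative_iff at_within_Icc_at_right[of "0::real" 1, simplified] .
  have "((\<lambda>t. c + t * e) \<longlongrightarrow> c + 0 * e) (at_right 0)"
    by (intro tendsto_intros)
  then show "((\<lambda>t. c + t * e) \<longlongrightarrow> c) (at_right 0)" by simp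
  show "\<forall>\<^sub>F t in at_right 0. (p t - p 0) / (t - 0) \<le> c + t * e"
    unfolding eventually_at_right[OF zero_less_one]
  proof (intro exI[of _ 1] conjI allI impI)
    fix t :: real assume t: "0 < t" "t < 1"
    then have "p t - p 0 \<le> t * (c + t * e)" using secant[of t] by (simp add: algebra_simps)
    then show "(p t - p 0) / (t - 0) \<le> c + t * e" using t by (simp add: divide_le_eq mult.commute)
  qed simp
qed simp

lemma bregman_ge_half_norm_sq:
  fixes \<omega> :: "'a::real_inner \<Rightarrow> real"
  assumes d: "\<And>w. w \<in> X \<Longrightarrow> (\<omega> has_derivative (\<lambda>v. inner (d\<omega> w) v)) (at w within X)"
    and X: "convex X" and x: "x \<in> X" and z: "z \<in> X"
    and sc: "strongly_convex_with X 1 \<omega>"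
  shows "(norm (z - x))\<^sup>2 / 2 \<le> bregman \<omega> d\<omega> x z"
proof -
  let ?d = "(norm (z - x))\<^sup>2"
  have "inner (d\<omega> x) (z - x) \<le> \<omega> z - \<omega> x - ?d / 2"
  proof (rule right_derivative_le_of_secant_le[OF has_real_derivative_along_segment[OF d[OF x] X x z]])
    fix t :: real assume t: "0 < t" "t \<le> 1"
    have "\<omega> ((1 - t) *\<^sub>R x + t *\<^sub>R z) \<le> (1 - t) * \<omega> x + t * \<omega> z - 1 / 2 * t * (1 - t) * ?d"
      using sc x z t unfolding strongly_convex_with_def by (auto simp: norm_minus_commute)
    moreover have "x + t *\<^sub>R (z - x) = (1 - t) *\<^sub>R x + t *\<^sub>R z" by (simp add: algebra_simps)
    ultimately show "\<omega> (x + t *\<^sub>R (z - x)) - \<omega> (x + 0 *\<^sub>R (z - x))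
        \<le> t * (\<omega> z - \<omega> x - ?d / 2) + t * t * (?d / 2)"
      by (simp add: field_simps)
  qed
  then show ?thesis unfolding bregman_def by simp
qed

lemma bregman_nonneg:
  fixes \<omega> :: "'a::real_inner \<Rightarrow> real"
  assumes "\<And>w. w \<in> X \<Longrightarrow> (\<omega> has_derivative (\<lambda>v. inner (d\<omega> w) v)) (at w within X)"
    and "convex X" and "x \<in> X" and "z \<in> X"
    and "strongly_convex_with X 1 \<omega>"
  shows "0 \<le> bregman \<omega> d\<omega> x z"
  by (rule order_trans[OF _ bregman_ge_half_norm_sq[OF assms]]) simp

lemma is_prox_variational_inequality:
  fixes \<omega> :: "'a::real_inner \<Rightarrow> real"
  assumes d: "(\<omega> has_derivative (\<lambda>v. inner (d\<omega> z) v)) (at z within X)"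
    and X: "convex X" and u: "u \<in> X"
    and prox: "is_prox X \<omega> d\<omega> x y z"
  shows "inner (d\<omega> x - y) (u - z) \<le> inner (d\<omega> z) (u - z)"
proof -
  have z: "z \<in> X" using prox unfolding is_prox_def by auto
  show ?thesis
  proof (rule right_derivative_ge_of_secant_ge[OF has_real_derivative_along_segment[OF d X z u]])
    fix t :: real assume t: "0 < t" "t \<le> 1"
    have "z + t *\<^sub>R (u - z) = (1 - t) *\<^sub>R z + t *\<^sub>R u" by (simp add: algebra_simps)
    then have "z + t *\<^sub>R (u - z) \<in> X" using convexD[OF X z u, of "1 - t" t] t by simp
    then have "inner y z + bregman \<omega> d\<omega> x z
        \<le> inner y (z + t *\<^sub>R (u - z)) + bregman \<omega> d\<omega> x (z + t *\<^sub>R (u - z))"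
      using prox unfolding is_prox_def by auto
    then show "t * inner (d\<omega> x - y) (u - z) \<le> \<omega> (z + t *\<^sub>R (u - z)) - \<omega> (z + 0 *\<^sub>R (u - z))"
      unfolding bregman_def by (simp add: algebra_simps inner_diff_left inner_diff_right inner_add_right)
  qed
qed

lemma is_prox_three_point:
  fixes \<omega> :: "'a::real_inner \<Rightarrow> real"
  assumes d: "\<And>w. w \<in> X \<Longrightarrow> (\<omega> has_derivative (\<lambda>v. inner (d\<omega> w) v)) (at w within X)"
    and X: "convex X" and u: "u \<in> X" and x: "x \<in> X"
    and sc: "strongly_convex_with X 1 \<omega>"
    and prox: "is_prox X \<omega> d\<omega> x y z"
  shows "inner y (x - u) \<le> bregman \<omega> d\<omega> x u - bregman \<omega> d\<omega> z u + (norm y)\<^sup>2 / 2"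
proof -
  have z: "z \<in> X" using prox unfolding is_prox_def by auto
  have "inner (d\<omega> x - y) (u - z) \<le> inner (d\<omega> z) (u - z)"
    by (rule is_prox_variational_inequality[OF d[OF z] X u prox])
  then have "inner y (z - u) \<le> inner (d\<omega> z - d\<omega> x) (u - z)"
    by (simp add: inner_diff_left inner_diff_right algebra_simps)
  also have "\<dots> = bregman \<omega> d\<omega> x u - bregman \<omega> d\<omega> x z - bregman \<omega> d\<omega> z u"
    unfolding bregman_def by (simp add: algebra_simps inner_diff_left inner_diff_right)
  finally have vi: "inner y (z - u) \<le> bregman \<omega> d\<omega> x u - bregman \<omega> d\<omega> x z - bregman \<omega> d\<omega> z u" .
  have "inner y (x - z) \<le> norm y * norm (z - x)"
    using norm_cauchy_schwarz[of y "x - z"] by (simp add: norm_minus_commute)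
  also have "\<dots> \<le> (norm y)\<^sup>2 / 2 + (norm (z - x))\<^sup>2 / 2"
    using sum_squares_bound[of "norm y" "norm (z - x)"] by (simp add: power2_eq_square)
  also have "\<dots> \<le> (norm y)\<^sup>2 / 2 + bregman \<omega> d\<omega> x z"
    using bregman_ge_half_norm_sq[OF d X x z sc] by simp
  finally have "inner y (x - z) \<le> (norm y)\<^sup>2 / 2 + bregman \<omega> d\<omega> x z" .
  with vi show ?thesis by (simp add: inner_diff_right)
qed

lemma is_prox_subgradient_step_descent:
  fixes \<omega> \<phi> :: "'a::real_inner \<Rightarrow> real"
  assumes d: "\<And>w. w \<in> X \<Longrightarrow> (\<omega> has_derivative (\<lambda>v. inner (d\<omega> w) v)) (at w within X)"
    and X: "convex X" and u: "u \<in> X" and x: "x \<in> X"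
    and sc: "strongly_convex_with X 1 \<omega>"
    and prox: "is_prox X \<omega> d\<omega> x (\<gamma> *\<^sub>R s) z"
    and \<phi>_sc: "\<phi> u \<ge> \<phi> x + inner s (u - x) + \<mu> / 2 * (norm (u - x))\<^sup>2"
    and \<phi>_u: "\<phi> u \<le> 0" and \<phi>_x: "\<eta> < \<phi> x"
    and V_bound: "bregman \<omega> d\<omega> x u \<le> L / 2 * (norm (x - u))\<^sup>2"
    and s: "norm s \<le> G" and \<gamma>: "\<gamma> > 0" and L: "L > 0" and \<mu>: "\<mu> > 0"
  shows "\<gamma> * \<eta> + \<gamma> * (\<mu> / L) * bregman \<omega> d\<omega> x u
           < bregman \<omega> d\<omega> x u - bregman \<omega> d\<omega> z u + \<gamma>\<^sup>2 * G\<^sup>2 / 2"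
proof -
  let ?V = "bregman \<omega> d\<omega> x u"
  have "\<mu> / L * ?V \<le> \<mu> / L * (L / 2 * (norm (x - u))\<^sup>2)"
    using V_bound \<mu> L by (intro mult_left_mono) auto
  also have "\<dots> = \<mu> / 2 * (norm (u - x))\<^sup>2"
    using L by (simp add: norm_minus_commute)
  finally have "\<mu> / L * ?V \<le> \<mu> / 2 * (norm (u - x))\<^sup>2" .
  moreover have "inner s (x - u) = - inner s (u - x)"
    by (simp add: inner_diff_right)
  ultimately have "\<eta> + \<mu> / L * ?V < inner s (x - u)"
    using \<phi>_sc \<phi>_u \<phi>_x by linarith
  then have "\<gamma> * (\<eta> + \<mu> / L * ?V) < inner (\<gamma> *\<^sub>R s) (x - u)"
    using \<gamma> by simp
  also have "\<dots> \<le> ?V - bregman \<omega> d\<omega> z u + (norm (\<gamma> *\<^sub>R s))\<^sup>2 / 2"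
    by (rule is_prox_three_point[OF d X u x sc prox])
  also have "(norm (\<gamma> *\<^sub>R s))\<^sup>2 \<le> \<gamma>\<^sup>2 * G\<^sup>2"
    using \<gamma> s by (simp add: power_mult_distrib mult_left_mono power_mono)
  finally show ?thesis by (simp add: algebra_simps)
qed

text \<open>k (k + 1) / 2 is the weight that makes the V-terms telescope.\<close>

lemma descent_step_weighted:
  fixes k L \<mu> \<eta> G V V' :: real
  defines "\<gamma> \<equiv> 2 * L / (\<mu> * (k + 1))"
  assumes k: "k \<ge> 1" and L: "L > 0" and \<mu>: "\<mu> > 0" and G: "G \<ge> 0"
    and descent: "\<gamma> * \<eta> + \<gamma> * (\<mu> / L) * V < V - V' + \<gamma>\<^sup>2 * G / 2"
  shows "\<eta> * L / \<mu> * k + k * (k + 1) / 2 * V' - (k - 1) * k / 2 * V < L\<^sup>2 * G / \<mu>\<^sup>2"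
proof -
  define W where "W = k * (k + 1) / 2"
  have W: "W > 0" using k by (simp add: W_def)
  have k1: "k + 1 \<noteq> 0" "\<mu> * (k + 1) \<noteq> 0" using k \<mu> by auto
  have W\<gamma>: "W * \<gamma> = k * L / \<mu>"
    using k1 \<mu> by (simp add: W_def \<gamma>_def field_simps)
  have "\<eta> * L / \<mu> * k + k * V = (W * \<gamma>) * \<eta> + (W * \<gamma>) * (\<mu> / L) * V"
    unfolding W\<gamma> using L \<mu> by (simp add: field_simps)
  also have "\<dots> = W * (\<gamma> * \<eta> + \<gamma> * (\<mu> / L) * V)"
    by (simp add: algebra_simps)
  also have "\<dots> < W * (V - V' + \<gamma>\<^sup>2 * G / 2)"
    using descent W by simp
  also have "\<dots> = W * V - W * V' + (W * \<gamma>) * \<gamma> * G / 2"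
    by (simp add: algebra_simps power2_eq_square)
  also have "(W * \<gamma>) * \<gamma> * G / 2 = k / (k + 1) * (L\<^sup>2 * G / \<mu>\<^sup>2)"
    unfolding W\<gamma> using k \<mu> by (simp add: \<gamma>_def divide_simps power2_eq_square)
  also have "k / (k + 1) * (L\<^sup>2 * G / \<mu>\<^sup>2) \<le> L\<^sup>2 * G / \<mu>\<^sup>2"
    using k G by (intro mult_left_le_one_le) auto
  finally show ?thesis by (simp add: W_def field_simps)
qed

lemma descent_telescoping_bound:
  fixes V :: "nat \<Rightarrow> real" and L \<mu> \<eta> G :: real and N :: nat
  assumes L: "L > 0" and \<mu>: "\<mu> > 0" and G: "G \<ge> 0" and N: "N \<ge> 1" and V: "V (Suc N) \<ge> 0"
    and descent: "\<And>k. 1 \<le> k \<Longrightarrow> k \<le> N \<Longrightarrow>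
      2 * L / (\<mu> * (real k + 1)) * \<eta> + 2 * L / (\<mu> * (real k + 1)) * (\<mu> / L) * V k
        < V k - V (Suc k) + (2 * L / (\<mu> * (real k + 1)))\<^sup>2 * G / 2"
  shows "\<eta> < 2 * L * G / (\<mu> * (real N + 1))"
proof -
  define S where "S k = (real k - 1) * real k / 2 * V k" for k
  have gauss: "(\<Sum>k = 1..N. real k) = real N * (real N + 1) / 2"
    using double_gauss_sum_from_Suc_0[of N, where 'a = real] by simp
  have S: "S (Suc N) \<ge> 0" "S 1 = 0" using V by (simp_all add: S_def)
  have "\<eta> * L / \<mu> * (real N * (real N + 1) / 2) + S (Suc N)
      = \<eta> * L / \<mu> * (\<Sum>k = 1..N. real k) + (S (Suc N) - S 1)"
    unfolding gauss S(2) by simp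
  also have "\<dots> = (\<Sum>k = 1..N. \<eta> * L / \<mu> * real k + (S (Suc k) - S k))"
    using N by (simp add: sum.distrib sum_Suc_diff sum_distrib_left)
  also have "\<dots> < (\<Sum>k = 1..N. L\<^sup>2 * G / \<mu>\<^sup>2)"
  proof (rule sum_strict_mono)
    fix k assume "k \<in> {1..N}"
    then show "\<eta> * L / \<mu> * real k + (S (Suc k) - S k) < L\<^sup>2 * G / \<mu>\<^sup>2"
      using descent_step_weighted[of "real k" L \<mu> G \<eta> "V k" "V (Suc k)"] descent[of k] L \<mu> G
      by (simp add: S_def algebra_simps)
  qed (use N in auto)
  also have "\<dots> = real N * (L\<^sup>2 * G / \<mu>\<^sup>2)" by simp
  finally have "\<eta> * L / \<mu> * (real N * (real N + 1) / 2) < real N * (L\<^sup>2 * G / \<mu>\<^sup>2)"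
    using S by linarith
  moreover have "\<eta> * L / \<mu> * (real N * (real N + 1) / 2) = \<eta> * c"
    and "real N * (L\<^sup>2 * G / \<mu>\<^sup>2) = 2 * L * G / (\<mu> * (real N + 1)) * c"
    if "c = L * real N * (real N + 1) / (2 * \<mu>)" for c
    using that \<mu> add_pos_nonneg[OF \<mu>, of "\<mu> * real N"]
    by (simp_all add: field_simps power2_eq_square)
  moreover have "L * real N * (real N + 1) / (2 * \<mu>) > 0" using L \<mu> N by simp
  ultimately show ?thesis by (metis mult_less_cancel_right_pos)
qed

lemma policy_P2_tolerance_lower_bound:
  fixes L \<mu>_f \<mu>_g L_f L_g \<eta> :: real and N :: nat
  assumes L: "L > 0" and N: "N \<ge> 1" and \<mu>: "\<mu>_f > 0" "\<mu>_g > 0"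
    and \<eta>: "\<eta> = 8 * L / real N * max \<mu>_f \<mu>_g * max (L_f\<^sup>2 / \<mu>_f\<^sup>2) (L_g\<^sup>2 / \<mu>_g\<^sup>2)"
  shows "2 * L * L_g\<^sup>2 / (\<mu>_g * (real N + 1)) \<le> \<eta>"
proof -
  have "2 * L * L_g\<^sup>2 / (\<mu>_g * (real N + 1)) \<le> 8 * L * L_g\<^sup>2 / (\<mu>_g * real N)"
    using L N \<mu> by (intro frac_le) auto
  also have "\<dots> = 8 * L / real N * \<mu>_g * (L_g\<^sup>2 / \<mu>_g\<^sup>2)"
    using \<mu> by (simp add: field_simps power2_eq_square)
  also have "\<dots> \<le> \<eta>"
    unfolding \<eta> using L N \<mu> by (intro mult_mono) auto
  finally show ?thesis .
qed

lemma le_Gmax: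
  assumes "compact \<Delta>" and "continuous_on \<Delta> (g u)" and "d \<in> \<Delta>"
  shows "g u d \<le> Gmax g \<Delta> u"
proof -
  have "bdd_above (g u ` \<Delta>)"
    using assms by (intro bounded_imp_bdd_above compact_imp_bounded compact_continuous_image)
  then show ?thesis unfolding Gmax_def using \<open>d \<in> \<Delta>\<close> by (rule cSUP_upper2) simp
qed

lemma is_prox_iterates_in:
  assumes x1: "x 1 \<in> X"
    and prox: "\<And>k. 1 \<le> k \<Longrightarrow> k \<le> N \<Longrightarrow> is_prox X \<omega> d\<omega> (x k) (y k) (x (Suc k))"
    and k: "1 \<le> k" "k \<le> Suc N"
  shows "x k \<in> X"
  using k
proof (induction k rule: dec_induct)
  case (step k)
  then show ?case using prox[of k] unfolding is_prox_def by simp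
qed (use x1 in simp)

theorem mainTheorem4:
  fixes X :: "'a::euclidean_space set" and \<Delta> :: "'b::euclidean_space set"
    and f :: "'a \<Rightarrow> real" and g :: "'a \<Rightarrow> 'b \<Rightarrow> real"
    and fsub :: "'a \<Rightarrow> 'a" and gsub :: "'a \<Rightarrow> 'b \<Rightarrow> 'a"
    and \<omega> :: "'a \<Rightarrow> real" and d\<omega> :: "'a \<Rightarrow> 'a"
    and L_f L_gX L_gD \<mu>_f \<mu>_g L \<eta> :: real and N :: nat
    and x :: "nat \<Rightarrow> 'a" and \<delta> :: "nat \<Rightarrow> 'b" and h :: "nat \<Rightarrow> 'a" and \<gamma> :: "nat \<Rightarrow> real"
  assumes X: "convex X" "compact X"
    and f_convex: "convex_on X f" and f_lip: "L_f-lipschitz_on X f"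
    and Delta: "compact \<Delta>"
    and g_convex: "\<And>d. d \<in> \<Delta> \<Longrightarrow> convex_on X (\<lambda>y. g y d)"
    and g_lipX: "\<And>d. d \<in> \<Delta> \<Longrightarrow> L_gX-lipschitz_on X (\<lambda>y. g y d)"
    and g_lipD: "\<And>y. y \<in> X \<Longrightarrow> L_gD-lipschitz_on \<Delta> (\<lambda>d. g y d)"
    and opt: "\<exists>xs\<in>X. Gmax g \<Delta> xs \<le> 0 \<and> (\<forall>y\<in>X. Gmax g \<Delta> y \<le> 0 \<longrightarrow> f xs \<le> f y)"
    and fsub: "\<And>y. y \<in> X \<Longrightarrow> is_subgrad_on X f y (fsub y) \<and> norm (fsub y) \<le> L_f"
    and gsub: "\<And>y d. y \<in> X \<Longrightarrow> d \<in> \<Delta> \<Longrightarrow>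
                 is_subgrad_on X (\<lambda>z. g z d) y (gsub y d) \<and> norm (gsub y d) \<le> L_gX"
    and omega_diff: "\<And>y. y \<in> X \<Longrightarrow> (\<omega> has_derivative (\<lambda>v. inner (d\<omega> y) v)) (at y within X)"
    and omega_C1: "continuous_on X d\<omega>"
    and omega_sc: "strongly_convex_with X 1 \<omega>"
    and mu_pos: "\<mu>_f > 0" "\<mu>_g > 0"
    and f_sc: "\<And>y z. y \<in> X \<Longrightarrow> z \<in> X \<Longrightarrow>
                 f y \<ge> f z + inner (fsub z) (y - z) + \<mu>_f / 2 * (norm (y - z))\<^sup>2"
    and g_sc: "\<And>d y z. d \<in> \<Delta> \<Longrightarrow> y \<in> X \<Longrightarrow> z \<in> X \<Longrightarrow>
                 g y d \<ge> g z d + inner (gsub z d) (y - z) + \<mu>_g / 2 * (norm (y - z))\<^sup>2"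
    and L_pos: "L > 0"
    and V_bound: "\<And>y z. y \<in> X \<Longrightarrow> z \<in> X \<Longrightarrow> bregman \<omega> d\<omega> y z \<le> L / 2 * (norm (y - z))\<^sup>2"
    and N: "N \<ge> 1"
    and eta: "\<eta> = 8 * L / real N * max \<mu>_f \<mu>_g * max (L_f\<^sup>2 / \<mu>_f\<^sup>2) (L_gX\<^sup>2 / \<mu>_g\<^sup>2)"
    and x1: "x 1 \<in> X"
    and delta: "\<And>k. 1 \<le> k \<Longrightarrow> k \<le> N \<Longrightarrow> \<delta> k \<in> \<Delta>"
    and h: "\<And>k. 1 \<le> k \<Longrightarrow> k \<le> N \<Longrightarrow>
              h k = (if g (x k) (\<delta> k) \<le> \<eta> then fsub (x k) else gsub (x k) (\<delta> k))"
    and gamma: "\<And>k. 1 \<le> k \<Longrightarrow> k \<le> N \<Longrightarrow>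
              \<gamma> k = (if g (x k) (\<delta> k) \<le> \<eta> then 2 * L / (\<mu>_f * (real k + 1))
                                            else 2 * L / (\<mu>_g * (real k + 1)))"
    and step: "\<And>k. 1 \<le> k \<Longrightarrow> k \<le> N \<Longrightarrow> is_prox X \<omega> d\<omega> (x k) (\<gamma> k *\<^sub>R h k) (x (Suc k))"
  shows "{k \<in> {1..N}. g (x k) (\<delta> k) \<le> \<eta>} \<noteq> {}"
proof (rule ccontr)
  assume "\<not> ?thesis"
  then have infeasible: "\<And>k. 1 \<le> k \<Longrightarrow> k \<le> N \<Longrightarrow> \<eta> < g (x k) (\<delta> k)" by fastforce
  obtain u where u: "u \<in> X" "Gmax g \<Delta> u \<le> 0" using opt by blast
  have u_feasible: "g u d \<le> 0" if "d \<in> \<Delta>" for d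
    using le_Gmax[of \<Delta> g u, OF Delta lipschitz_on_continuous_on[OF g_lipD[OF u(1)]] that] u(2) by simp
  have xX: "x k \<in> X" if "1 \<le> k" "k \<le> Suc N" for k
    using is_prox_iterates_in[OF x1 step that] .
  define V where "V k = bregman \<omega> d\<omega> (x k) u" for k
  have "\<eta> < 2 * L * L_gX\<^sup>2 / (\<mu>_g * (real N + 1))"
  proof (rule descent_telescoping_bound[OF L_pos mu_pos(2) _ N])
    have xN: "x (Suc N) \<in> X" using xX N by simp
    show "0 \<le> V (Suc N)"
      unfolding V_def by (rule bregman_nonneg[OF omega_diff X(1) xN u(1) omega_sc])
    fix k assume k: "1 \<le> k" "k \<le> N"
    have xk: "x k \<in> X" and dk: "\<delta> k \<in> \<Delta>" using xX delta k by auto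
    have prox: "is_prox X \<omega> d\<omega> (x k) ((2 * L / (\<mu>_g * (real k + 1))) *\<^sub>R gsub (x k) (\<delta> k)) (x (Suc k))"
      using step[OF k] h[OF k] gamma[OF k] infeasible[OF k] by simp
    show "2 * L / (\<mu>_g * (real k + 1)) * \<eta> + 2 * L / (\<mu>_g * (real k + 1)) * (\<mu>_g / L) * V k
        < V k - V (Suc k) + (2 * L / (\<mu>_g * (real k + 1)))\<^sup>2 * L_gX\<^sup>2 / 2"
      unfolding V_def
      by (rule is_prox_subgradient_step_descent[OF omega_diff X(1) u(1) xk omega_sc prox
            g_sc[OF dk u(1) xk] u_feasible[OF dk] infeasible[OF k] V_bound[OF xk u(1)]
            conjunct2[OF gsub[OF xk dk]] _ L_pos mu_pos(2)])
        (use L_pos mu_pos in \<open>auto intro!: divide_pos_pos mult_pos_pos\<close>)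
  qed simp
  with policy_P2_tolerance_lower_bound[OF L_pos N mu_pos eta] show False by simp
qed

end
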